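(* Let $n\ge2$ and let $A=(a_{ij})$ be an $n\times n$ nonnegative irreducible matrix with row sums $r_1\ge r_2\ge\cdots\ge r_n$ (where $r_i=\sum_j a_{ij}$). Let $M=\max_{1\le i\le n}a_{ii}$ and $N=\max_{i\ne j}a_{ij}$, and assume $N>0$. Then for $1\le i\le n$, \[\rho(A)\le \frac{r_i+M-N+\sqrt{(r_i-M+N)^2+4N\sum_{k=1}^{i-1}(r_k-r_i)}}{2}.\] Equality holds if and only if $r_1=\cdots=r_n$, or for some $2\le t\le i$: (i) $a_{kk}=M$ for $1\le k\le t-1$; (ii) $a_{kl}=N$ for all $1\le k\le n$, $1\le l\le t-1$, $k\ne l$; (iii) $r_t=\cdots=r_n$.
   Context: $\rho(A)$ denotes the spectral radius of $A$. An empty sum equals $0$. *)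

theory Defs
  imports "Jordan_Normal_Form.Spectral_Radius"
begin

text \<open>A square matrix of dimension n is reducible if there is a nonempty proper subset I
  of the index set such that a_ij = 0 whenever i in I and j not in I (equivalently, it is
  permutation-similar to a block triangular matrix).
  Indices are 0-based.\<close>

definition reducible_mat :: "nat \<Rightarrow> real mat \<Rightarrow> bool" where
  "reducible_mat n A \<longleftrightarrow>
     (\<exists>I. I \<subseteq> {0..<n} \<and> I \<noteq> {} \<and> I \<noteq> {0..<n} \<and>
          (\<forall>i\<in>I. \<forall>j\<in>{0..<n} - I. A $$ (i, j) = 0))"

definition irreducible_mat :: "nat \<Rightarrow> real mat \<Rightarrow> bool" where
  "irreducible_mat n A \<longleftrightarrow> \<not> reducible_mat n A"

definition row_sum :: "real mat \<Rightarrow> nat \<Rightarrow> real" where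
  "row_sum A i = (\<Sum>j<dim_col A. A $$ (i, j))"

definition rho :: "real mat \<Rightarrow> real" where
  "rho A = spectral_radius (map_mat complex_of_real A)"

end

theory Submission
  imports Defs
begin

text \<open>Let s be the right-hand side, i.e. the larger root of
  (s - r_i)(s - M + N) = N \<Sum>_{k<i} (r_k - r_i), and test A on the positive vector
  x_k = 1 + (r_k - r_i)/(s - M + N) for k < i, x_k = 1 otherwise.  Bounding diagonal entries
  by M and off-diagonal ones by N gives Ax \<le> sx, so \<rho>(A) \<le> s by comparing x with the
  modulus of an eigenvector of maximal modulus.  For irreducible A the comparison is tight only
  if Ax = sx, and the slack of Ax \<le> sx vanishes exactly when the columns carrying weight are
  extremal and all row sums from i on equal r_i.\<close>

lemma irreducible_mat_closed_set:
  assumes "irreducible_mat n A" and "K \<subseteq> {0..<n}" and "K \<noteq> {}"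
    and "\<And>k j. k \<in> K \<Longrightarrow> j < n \<Longrightarrow> j \<notin> K \<Longrightarrow> A $$ (k, j) = 0"
  shows "K = {0..<n}"
proof (rule ccontr)
  assume "K \<noteq> {0..<n}"
  with assms(2-4) have "reducible_mat n A"
    unfolding reducible_mat_def by (intro exI[of _ K]) auto
  with assms(1) show False by (simp add: irreducible_mat_def)
qed

lemma exists_max_ratio:
  fixes u x :: "nat \<Rightarrow> real"
  assumes x_pos: "\<And>k. k < n \<Longrightarrow> 0 < x k" and u_nonneg: "\<And>k. k < n \<Longrightarrow> 0 \<le> u k"
    and u_nonzero: "\<exists>k<n. u k \<noteq> 0"
  obtains t m where "0 < t" and "m < n" and "u m = t * x m" and "\<And>j. j < n \<Longrightarrow> u j \<le> t * x j"
proof -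
  obtain k0 where "k0 < n" and "u k0 \<noteq> 0" using u_nonzero by blast
  define t where "t = Max ((\<lambda>j. u j / x j) ` {..<n})"
  have le_t: "u j / x j \<le> t" if "j < n" for j
    using that unfolding t_def by (intro Max_ge) auto
  have "t \<in> (\<lambda>j. u j / x j) ` {..<n}"
    unfolding t_def using \<open>k0 < n\<close> by (intro Max_in) auto
  then obtain m where m: "m < n" "u m / x m = t" by auto
  have "0 < u k0 / x k0"
    using x_pos u_nonneg \<open>k0 < n\<close> \<open>u k0 \<noteq> 0\<close> by (simp add: order_less_le)
  with le_t[OF \<open>k0 < n\<close>] have "0 < t" by linarith
  moreover have "u m = t * x m" using m x_pos[of m] by (auto simp: field_simps)
  moreover have "u j \<le> t * x j" if "j < n" for j
    using le_t[OF that] x_pos[OF that] by (simp add: divide_le_eq ac_simps)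
  ultimately show ?thesis using that m(1) by blast
qed

context
  fixes A :: "real mat" and n :: nat and x u :: "nat \<Rightarrow> real" and s l :: real
  assumes nonneg: "\<And>k j. k < n \<Longrightarrow> j < n \<Longrightarrow> 0 \<le> A $$ (k, j)"
    and x_pos: "\<And>k. k < n \<Longrightarrow> 0 < x k"
    and x_sub: "\<And>k. k < n \<Longrightarrow> (\<Sum>j<n. A $$ (k, j) * x j) \<le> s * x k"
    and u_nonneg: "\<And>k. k < n \<Longrightarrow> 0 \<le> u k"
    and u_nonzero: "\<exists>k<n. u k \<noteq> 0"
    and u_super: "\<And>k. k < n \<Longrightarrow> l * u k \<le> (\<Sum>j<n. A $$ (k, j) * u j)"
begin

lemma row_le_ratio:
  assumes "\<And>j. j < n \<Longrightarrow> u j \<le> t * x j" and "k < n"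
  shows "(\<Sum>j<n. A $$ (k, j) * u j) \<le> t * (\<Sum>j<n. A $$ (k, j) * x j)"
  unfolding sum_distrib_left
proof (intro sum_mono)
  fix j assume "j \<in> {..<n}"
  hence "A $$ (k, j) * u j \<le> A $$ (k, j) * (t * x j)"
    using assms nonneg by (simp add: mult_left_mono)
  thus "A $$ (k, j) * u j \<le> t * (A $$ (k, j) * x j)" by (simp add: ac_simps)
qed

lemma collatz_wielandt_le: "l \<le> s"
proof -
  obtain t m where t: "0 < t" "m < n" "u m = t * x m" "\<And>j. j < n \<Longrightarrow> u j \<le> t * x j"
    using exists_max_ratio[of n x u, OF x_pos u_nonneg u_nonzero] by blast
  have "l * u m \<le> t * (\<Sum>j<n. A $$ (m, j) * x j)"
    using u_super[OF t(2)] row_le_ratio[OF t(4) t(2)] by linarith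
  also have "\<dots> \<le> t * (s * x m)" using x_sub[OF t(2)] t(1) by simp
  finally have "l * u m \<le> s * u m" using t(3) by (simp add: ac_simps)
  moreover have "0 < u m" using t x_pos by simp
  ultimately show ?thesis by simp
qed

lemma collatz_wielandt_eq_imp_invariant:
  assumes irr: "irreducible_mat n A" and eq: "l = s" and "k < n"
  shows "(\<Sum>j<n. A $$ (k, j) * x j) = s * x k"
proof -
  obtain t m where t: "0 < t" "m < n" "u m = t * x m" "\<And>j. j < n \<Longrightarrow> u j \<le> t * x j"
    using exists_max_ratio[of n x u, OF x_pos u_nonneg u_nonzero] by blast
  text \<open>On rows where the ratio is maximal, the chain l u_k \<le> (Au)_k \<le> t(Ax)_k \<le> ts x_k
    is tight.\<close>
  have tight: "(\<Sum>j<n. A $$ (k, j) * u j) = t * (\<Sum>j<n. A $$ (k, j) * x j)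
      \<and> (\<Sum>j<n. A $$ (k, j) * x j) = s * x k" if "k < n" "u k = t * x k" for k
  proof -
    have "s * u k \<le> (\<Sum>j<n. A $$ (k, j) * u j)" using u_super[OF that(1)] eq by simp
    moreover note row_le_ratio[OF t(4) that(1)]
    moreover have "t * (\<Sum>j<n. A $$ (k, j) * x j) \<le> t * (s * x k)"
      using x_sub[OF that(1)] t(1) by simp
    moreover have "t * (s * x k) = s * u k" using that(2) by simp
    ultimately have "(\<Sum>j<n. A $$ (k, j) * u j) = t * (\<Sum>j<n. A $$ (k, j) * x j)"
      and "t * (\<Sum>j<n. A $$ (k, j) * x j) = t * (s * x k)" by linarith+
    thus ?thesis using t(1) by simp
  qed
  define K where "K = {k. k < n \<and> u k = t * x k}"
  have "A $$ (k, j) = 0" if "k \<in> K" "j < n" "j \<notin> K" for k j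
  proof -
    have k: "k < n" "u k = t * x k" using that(1) by (auto simp: K_def)
    have terms: "\<forall>p\<in>{..<n}. 0 \<le> A $$ (k, p) * (t * x p - u p)"
      using nonneg k t(4) by auto
    have "(\<Sum>p<n. A $$ (k, p) * (t * x p - u p))
        = (\<Sum>p<n. t * (A $$ (k, p) * x p) - A $$ (k, p) * u p)"
      by (rule sum.cong) (simp_all add: algebra_simps)
    also have "\<dots> = t * (\<Sum>p<n. A $$ (k, p) * x p) - (\<Sum>p<n. A $$ (k, p) * u p)"
      by (simp add: sum_subtractf sum_distrib_left)
    also have "\<dots> = 0" using tight[OF k] by simp
    finally have "(\<Sum>p<n. A $$ (k, p) * (t * x p - u p)) = 0" .
    hence "\<forall>p\<in>{..<n}. A $$ (k, p) * (t * x p - u p) = 0"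
      using sum_nonneg_eq_0_iff[of "{..<n}" "\<lambda>p. A $$ (k, p) * (t * x p - u p)"] terms
      by simp
    hence "A $$ (k, j) * (t * x j - u j) = 0" using that(2) by simp
    moreover have "t * x j - u j \<noteq> 0" using that(2,3) by (auto simp: K_def)
    ultimately show ?thesis by simp
  qed
  moreover have "K \<subseteq> {0..<n}" and "m \<in> K" using t(2,3) by (auto simp: K_def)
  ultimately have "K = {0..<n}" using irreducible_mat_closed_set[OF irr] by blast
  hence "k \<in> K" using \<open>k < n\<close> by simp
  hence "u k = t * x k" by (simp add: K_def)
  with tight[OF \<open>k < n\<close>] show ?thesis by simp
qed

end

lemma eigenvector_norm_super:
  fixes A :: "real mat"
  assumes A: "A \<in> carrier_mat n n" and nonneg: "\<And>k j. k < n \<Longrightarrow> j < n \<Longrightarrow> 0 \<le> A $$ (k, j)"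
    and ev: "eigenvector (map_mat complex_of_real A) v l" and k: "k < n"
  shows "cmod l * cmod (v $ k) \<le> (\<Sum>j<n. A $$ (k, j) * cmod (v $ j))"
proof -
  have v: "v \<in> carrier_vec n" "map_mat complex_of_real A *\<^sub>v v = l \<cdot>\<^sub>v v"
    using ev A unfolding eigenvector_def by auto
  have "l * v $ k = (map_mat complex_of_real A *\<^sub>v v) $ k" using v k by simp
  also have "\<dots> = (\<Sum>j<n. complex_of_real (A $$ (k, j)) * v $ j)"
    using A k v(1) by (simp add: scalar_prod_def atLeast0LessThan)
  finally have "cmod l * cmod (v $ k) = cmod (\<Sum>j<n. complex_of_real (A $$ (k, j)) * v $ j)"
    by (metis norm_mult)
  also have "\<dots> \<le> (\<Sum>j<n. cmod (complex_of_real (A $$ (k, j)) * v $ j))" by (rule norm_sum)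
  also have "\<dots> = (\<Sum>j<n. A $$ (k, j) * cmod (v $ j))"
    using nonneg k by (intro sum.cong) (auto simp: norm_mult)
  finally show ?thesis .
qed

lemma eigenvector_nonzero_entry:
  assumes "eigenvector B v l" and "B \<in> carrier_mat n n"
  obtains k where "k < n" and "v $ k \<noteq> 0"
proof -
  have "v \<in> carrier_vec n" "v \<noteq> 0\<^sub>v n" using assms unfolding eigenvector_def by auto
  hence "\<exists>k<n. v $ k \<noteq> 0" by (metis carrier_vecD eq_vecI index_zero_vec(1,2))
  thus ?thesis using that by blast
qed

lemma rho_attained:
  assumes "A \<in> carrier_mat n n" and "0 < n"
  obtains v l where "eigenvector (map_mat complex_of_real A) v l" and "rho A = cmod l"
proof -
  have "rho A \<in> norm ` spectrum (map_mat complex_of_real A)"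
    unfolding rho_def using assms by (intro spectral_radius_mem_max(1)) auto
  thus ?thesis using that by (auto simp: spectrum_def eigenvalue_def)
qed

lemma abs_eigenvalue_le_rho:
  fixes A :: "real mat" and x :: "nat \<Rightarrow> real"
  assumes A: "A \<in> carrier_mat n n" and "k0 < n" and "x k0 \<noteq> 0"
    and eig: "\<And>k. k < n \<Longrightarrow> (\<Sum>j<n. A $$ (k, j) * x j) = s * x k"
  shows "\<bar>s\<bar> \<le> rho A"
proof -
  let ?Ac = "map_mat complex_of_real A"
  define v where "v = vec n (\<lambda>j. complex_of_real (x j))"
  have "?Ac *\<^sub>v v = complex_of_real s \<cdot>\<^sub>v v"
  proof (rule eq_vecI)
    fix k assume "k < dim_vec (complex_of_real s \<cdot>\<^sub>v v)"
    hence k: "k < n" by (simp add: v_def)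
    have "(?Ac *\<^sub>v v) $ k = complex_of_real (\<Sum>j<n. A $$ (k, j) * x j)"
      using A k by (simp add: v_def scalar_prod_def atLeast0LessThan)
    thus "(?Ac *\<^sub>v v) $ k = (complex_of_real s \<cdot>\<^sub>v v) $ k"
      using eig[OF k] k by (simp add: v_def)
  qed (use A in \<open>simp add: v_def\<close>)
  moreover have "v \<noteq> 0\<^sub>v n"
    using \<open>k0 < n\<close> \<open>x k0 \<noteq> 0\<close> by (auto simp: v_def dest!: arg_cong[of _ _ "\<lambda>w. w $ k0"])
  ultimately have "eigenvector ?Ac v (complex_of_real s)"
    using A by (simp add: eigenvector_def v_def)
  hence "complex_of_real s \<in> spectrum ?Ac" unfolding spectrum_def eigenvalue_def by blast
  hence "cmod (complex_of_real s) \<in> norm ` spectrum ?Ac" by (rule imageI)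
  hence "cmod (complex_of_real s) \<le> rho A"
    unfolding rho_def using A \<open>k0 < n\<close> by (intro spectral_radius_mem_max(2)) auto
  thus ?thesis by simp
qed

lemma rho_supervector:
  fixes A :: "real mat"
  assumes A: "A \<in> carrier_mat n n" and "0 < n"
    and nonneg: "\<And>k j. k < n \<Longrightarrow> j < n \<Longrightarrow> 0 \<le> A $$ (k, j)"
  obtains u :: "nat \<Rightarrow> real" where "\<And>k. k < n \<Longrightarrow> 0 \<le> u k" and "\<exists>k<n. u k \<noteq> 0"
    and "\<And>k. k < n \<Longrightarrow> rho A * u k \<le> (\<Sum>j<n. A $$ (k, j) * u j)"
proof -
  obtain v l where ev: "eigenvector (map_mat complex_of_real A) v l" and rho: "rho A = cmod l"
    using rho_attained[OF A \<open>0 < n\<close>] .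
  have "map_mat complex_of_real A \<in> carrier_mat n n" using A by simp
  then obtain k where "k < n" "v $ k \<noteq> 0" using eigenvector_nonzero_entry[OF ev] by blast
  hence "\<exists>k<n. cmod (v $ k) \<noteq> 0" by auto
  with that[of "\<lambda>k. cmod (v $ k)"] show ?thesis
    using eigenvector_norm_super[OF A nonneg ev] unfolding rho by simp
qed

context
  fixes A :: "real mat" and n :: nat and x :: "nat \<Rightarrow> real" and s :: real
  assumes A: "A \<in> carrier_mat n n" and n_pos: "0 < n"
    and nonneg: "\<And>k j. k < n \<Longrightarrow> j < n \<Longrightarrow> 0 \<le> A $$ (k, j)"
    and x_pos: "\<And>k. k < n \<Longrightarrow> 0 < x k"
    and x_sub: "\<And>k. k < n \<Longrightarrow> (\<Sum>j<n. A $$ (k, j) * x j) \<le> s * x k"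
begin

lemma rho_le_of_subinvariant: "rho A \<le> s"
proof -
  obtain u where "\<And>k. k < n \<Longrightarrow> 0 \<le> u k" "\<exists>k<n. u k \<noteq> 0"
    "\<And>k. k < n \<Longrightarrow> rho A * u k \<le> (\<Sum>j<n. A $$ (k, j) * u j)"
    using rho_supervector[OF A n_pos nonneg] by blast
  from collatz_wielandt_le[OF nonneg x_pos x_sub this] show ?thesis .
qed

lemma rho_eq_iff_invariant:
  assumes irr: "irreducible_mat n A"
  shows "rho A = s \<longleftrightarrow> (\<forall>k<n. (\<Sum>j<n. A $$ (k, j) * x j) = s * x k)"
proof
  assume "rho A = s"
  obtain u where "\<And>k. k < n \<Longrightarrow> 0 \<le> u k" "\<exists>k<n. u k \<noteq> 0"
    "\<And>k. k < n \<Longrightarrow> rho A * u k \<le> (\<Sum>j<n. A $$ (k, j) * u j)"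
    using rho_supervector[OF A n_pos nonneg] by blast
  from collatz_wielandt_eq_imp_invariant[OF nonneg x_pos x_sub this irr \<open>rho A = s\<close>]
  show "\<forall>k<n. (\<Sum>j<n. A $$ (k, j) * x j) = s * x k" by blast
next
  assume "\<forall>k<n. (\<Sum>j<n. A $$ (k, j) * x j) = s * x k"
  hence "\<bar>s\<bar> \<le> rho A"
    using abs_eigenvalue_le_rho[OF A n_pos, of x s] x_pos[OF n_pos] by simp
  thus "rho A = s" using rho_le_of_subinvariant by simp
qed

end

locale row_sum_bound =
  fixes A :: "real mat" and n :: nat and M N :: real and i :: nat
  assumes A_carrier: "A \<in> carrier_mat n n"
    and nonneg: "\<And>k j. k < n \<Longrightarrow> j < n \<Longrightarrow> 0 \<le> A $$ (k, j)"
    and row_sum_antimono: "\<And>k l. k \<le> l \<Longrightarrow> l < n \<Longrightarrow> row_sum A l \<le> row_sum A k"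
    and diag_le: "\<And>k. k < n \<Longrightarrow> A $$ (k, k) \<le> M"
    and offdiag_le: "\<And>k l. k < n \<Longrightarrow> l < n \<Longrightarrow> k \<noteq> l \<Longrightarrow> A $$ (k, l) \<le> N"
    and N_pos: "0 < N"
    and M_le_row_sum: "M \<le> row_sum A 0"
    and i_less: "i < n"
begin

abbreviation r :: "nat \<Rightarrow> real" where "r \<equiv> row_sum A"

definition excess :: real where "excess = (\<Sum>k<i. r k - r i)"

definition bound :: real where
  "bound = (r i + M - N + sqrt ((r i - M + N)\<^sup>2 + 4 * N * excess)) / 2"

definition gap :: real where "gap = bound - M + N"

definition weight :: "nat \<Rightarrow> real" where
  "weight k = (if k < i then (r k - r i) / gap else 0)"

definition extremal_entry :: "nat \<Rightarrow> nat \<Rightarrow> real" where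
  "extremal_entry k j = (if j = k then M else N)"

definition equality_case :: bool where
  "equality_case \<longleftrightarrow> (\<forall>k<n. \<forall>j<n. j < i \<and> r i < r j \<longrightarrow> A $$ (k, j) = extremal_entry k j)
     \<and> (\<forall>k. i \<le> k \<and> k < n \<longrightarrow> r k = r i)"

lemma row_sum_eq: "r k = (\<Sum>j<n. A $$ (k, j))"
  using A_carrier by (simp add: row_sum_def)

lemma excess_nonneg: "0 \<le> excess"
  unfolding excess_def using row_sum_antimono i_less by (intro sum_nonneg) auto

lemma excess_zero_imp_row_sum_eq:
  assumes "excess = 0" and "k < i"
  shows "r k = r i"
proof -
  have "\<forall>k\<in>{..<i}. r k - r i = 0"
    using assms(1) sum_nonneg_eq_0_iff[of "{..<i}" "\<lambda>k. r k - r i"] row_sum_antimono i_less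
    unfolding excess_def by auto
  thus ?thesis using assms(2) by simp
qed

lemma bound_quadratic: "(bound - r i) * gap = N * excess"
proof -
  have "0 \<le> (r i - M + N)\<^sup>2 + 4 * N * excess"
    using excess_nonneg N_pos by simp
  thus ?thesis unfolding gap_def bound_def by (simp add: field_simps power2_eq_square)
qed

text \<open>Where all row sums before i equal r_i, positivity comes from M \<le> r_0; otherwise from
  excess > 0, which makes the square root exceed the absolute value of r_i - M + N.\<close>
lemma gap_pos: "0 < gap"
proof -
  define a where "a = r i - M + N"
  define q where "q = sqrt (a\<^sup>2 + 4 * N * excess)"
  have gap_eq: "gap = (a + q) / 2" by (simp add: gap_def bound_def a_def q_def field_simps)
  have "sqrt (a\<^sup>2) \<le> q"
    unfolding q_def using excess_nonneg N_pos by (intro real_sqrt_le_mono) simp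
  hence "\<bar>a\<bar> \<le> q" by simp
  show ?thesis
  proof (cases "excess = 0")
    case True
    have "r i = r 0" using excess_zero_imp_row_sum_eq[OF True, of 0] by (cases "i = 0") auto
    hence "0 < a" using M_le_row_sum N_pos by (simp add: a_def)
    with \<open>\<bar>a\<bar> \<le> q\<close> have "0 < a + q" by linarith
    thus ?thesis by (simp add: gap_eq)
  next
    case False
    hence "0 < excess" using excess_nonneg by simp
    hence "sqrt (a\<^sup>2) < q"
      unfolding q_def using N_pos by (intro real_sqrt_less_mono) simp
    hence "\<bar>a\<bar> < q" by simp
    hence "0 < a + q" by linarith
    thus ?thesis by (simp add: gap_eq)
  qed
qed

lemma weight_nonneg: "0 \<le> weight k"
  using row_sum_antimono i_less gap_pos by (simp add: weight_def)

lemma weight_pos_iff: "0 < weight k \<longleftrightarrow> k < i \<and> r i < r k"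
  using gap_pos by (simp add: weight_def zero_less_divide_iff)

lemma N_sum_weight: "N * (\<Sum>k<n. weight k) = bound - r i"
proof -
  have "(\<Sum>k<n. weight k) = (\<Sum>k<i. (r k - r i) / gap)"
    using i_less by (intro sum.mono_neutral_cong_right) (auto simp: weight_def)
  also have "\<dots> = excess / gap" by (simp add: excess_def sum_divide_distrib)
  finally have "N * (\<Sum>k<n. weight k) = N * excess / gap" by simp
  also have "\<dots> = bound - r i" using gap_pos by (simp add: bound_quadratic[symmetric])
  finally show ?thesis .
qed

lemma level_slack: "gap * weight k - (r k - r i) = (if k < i then 0 else r i - r k)"
  using gap_pos by (simp add: weight_def)

lemma slack_eq:
  assumes "k < n"
  shows "bound * (1 + weight k) - (\<Sum>j<n. A $$ (k, j) * (1 + weight j))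
    = (\<Sum>j<n. (extremal_entry k j - A $$ (k, j)) * weight j) + (gap * weight k - (r k - r i))"
proof -
  have "(\<Sum>j<n. extremal_entry k j * weight j)
      = (\<Sum>j<n. N * weight j + (if j = k then (M - N) * weight j else 0))"
    by (intro sum.cong) (auto simp: extremal_entry_def algebra_simps)
  also have "\<dots> = (bound - r i) + (M - N) * weight k"
    using assms N_sum_weight by (simp add: sum.distrib sum_distrib_left[symmetric])
  finally have "(\<Sum>j<n. extremal_entry k j * weight j) = (bound - r i) + (M - N) * weight k" .
  moreover have "(\<Sum>j<n. A $$ (k, j) * (1 + weight j)) = r k + (\<Sum>j<n. A $$ (k, j) * weight j)"
    by (simp add: distrib_left sum.distrib row_sum_eq)
  ultimately show ?thesis by (simp add: gap_def sum_subtractf algebra_simps)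
qed

lemma weighted_slack_nonneg:
  assumes "k < n" and "j < n"
  shows "0 \<le> (extremal_entry k j - A $$ (k, j)) * weight j"
  using assms diag_le offdiag_le weight_nonneg by (auto simp: extremal_entry_def)

lemma test_vector_sub:
  assumes "k < n"
  shows "(\<Sum>j<n. A $$ (k, j) * (1 + weight j)) \<le> bound * (1 + weight k)"
proof -
  have "0 \<le> (\<Sum>j<n. (extremal_entry k j - A $$ (k, j)) * weight j)"
    using weighted_slack_nonneg assms by (intro sum_nonneg) auto
  moreover have "0 \<le> gap * weight k - (r k - r i)"
    using level_slack row_sum_antimono[of i k] assms by simp
  ultimately show ?thesis using slack_eq[OF assms] by linarith
qed

lemma test_vector_invariant_iff:
  "(\<forall>k<n. (\<Sum>j<n. A $$ (k, j) * (1 + weight j)) = bound * (1 + weight k)) \<longleftrightarrow> equality_case"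
proof -
  have row_iff: "(\<Sum>j<n. A $$ (k, j) * (1 + weight j)) = bound * (1 + weight k)
      \<longleftrightarrow> (\<forall>j<n. j < i \<and> r i < r j \<longrightarrow> A $$ (k, j) = extremal_entry k j)
        \<and> (i \<le> k \<longrightarrow> r k = r i)" if k: "k < n" for k
  proof -
    let ?S1 = "\<Sum>j<n. (extremal_entry k j - A $$ (k, j)) * weight j"
    let ?S2 = "gap * weight k - (r k - r i)"
    have term_zero: "(extremal_entry k j - A $$ (k, j)) * weight j = 0
        \<longleftrightarrow> (0 < weight j \<longrightarrow> A $$ (k, j) = extremal_entry k j)" for j
      using weight_nonneg[of j] by (auto simp: order_less_le)
    have "?S1 = 0 \<longleftrightarrow> (\<forall>j\<in>{..<n}. (extremal_entry k j - A $$ (k, j)) * weight j = 0)"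
      by (rule sum_nonneg_eq_0_iff) (simp_all add: weighted_slack_nonneg[OF k])
    hence entries: "?S1 = 0 \<longleftrightarrow> (\<forall>j<n. j < i \<and> r i < r j \<longrightarrow> A $$ (k, j) = extremal_entry k j)"
      by (simp only: term_zero weight_pos_iff Ball_def lessThan_iff)
    have level: "?S2 = 0 \<longleftrightarrow> (i \<le> k \<longrightarrow> r k = r i)"
      using level_slack by auto
    have "0 \<le> ?S1" using weighted_slack_nonneg k by (intro sum_nonneg) auto
    moreover have "0 \<le> ?S2" using level_slack row_sum_antimono[of i k] k by simp
    moreover have "(\<Sum>j<n. A $$ (k, j) * (1 + weight j)) = bound * (1 + weight k)
        \<longleftrightarrow> ?S1 + ?S2 = 0"
      unfolding slack_eq[OF k, symmetric] by auto
    ultimately show ?thesis using entries level by (simp add: add_nonneg_eq_0_iff)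
  qed
  show ?thesis unfolding equality_case_def using row_iff by blast
qed

lemma n_pos: "0 < n"
  using i_less by simp

lemma test_vector_pos: "0 < 1 + weight k"
  using weight_nonneg[of k] by simp

lemma rho_le_bound: "rho A \<le> bound"
  using rho_le_of_subinvariant[OF A_carrier n_pos nonneg test_vector_pos test_vector_sub] .

lemma rho_eq_bound_iff:
  assumes "irreducible_mat n A"
  shows "rho A = bound \<longleftrightarrow> equality_case"
  using rho_eq_iff_invariant[OF A_carrier n_pos nonneg test_vector_pos test_vector_sub assms]
  unfolding test_vector_invariant_iff .

definition first_level :: nat where "first_level = (LEAST t. r t = r i)"

lemma first_level_le: "first_level \<le> i"
  unfolding first_level_def by (rule Least_le) simp

lemma row_sum_first_level: "r first_level = r i"
  unfolding first_level_def by (rule LeastI[of _ i]) simp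

lemma row_sum_gt_before_first_level:
  assumes "j < first_level"
  shows "j < i" and "r i < r j"
proof -
  show "j < i" using assms first_level_le by simp
  hence "r i \<le> r j" using row_sum_antimono i_less by simp
  moreover have "r j \<noteq> r i" using not_less_Least[of j "\<lambda>t. r t = r i"] assms
    unfolding first_level_def by blast
  ultimately show "r i < r j" by simp
qed

definition extremal_before :: "nat \<Rightarrow> bool" where
  "extremal_before t \<longleftrightarrow> (\<forall>k<n. \<forall>j<t. A $$ (k, j) = extremal_entry k j)
    \<and> (\<forall>k. t \<le> k \<and> k < n \<longrightarrow> r k = r t)"

text \<open>The paper's equality condition, with t = 0 standing for the case of equal row sums.\<close>
lemma paper_condition_iff_extremal_before:
  "(\<forall>k<n. r k = r 0) \<or> (\<exists>t. 1 \<le> t \<and> t \<le> i \<and>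
       (\<forall>k<t. A $$ (k, k) = M) \<and>
       (\<forall>k<n. \<forall>l<t. k \<noteq> l \<longrightarrow> A $$ (k, l) = N) \<and>
       (\<forall>k. t \<le> k \<and> k < n \<longrightarrow> r k = r t))
   \<longleftrightarrow> (\<exists>t\<le>i. extremal_before t)"
proof -
  have extremal_before_iff: "extremal_before t \<longleftrightarrow> (\<forall>k<t. A $$ (k, k) = M) \<and>
       (\<forall>k<n. \<forall>l<t. k \<noteq> l \<longrightarrow> A $$ (k, l) = N) \<and>
       (\<forall>k. t \<le> k \<and> k < n \<longrightarrow> r k = r t)" if "t \<le> i" for t
  proof -
    have "t \<le> n" using that i_less by simp
    hence "(\<forall>k<n. \<forall>j<t. A $$ (k, j) = extremal_entry k j)
      \<longleftrightarrow> (\<forall>k<t. A $$ (k, k) = M) \<and> (\<forall>k<n. \<forall>l<t. k \<noteq> l \<longrightarrow> A $$ (k, l) = N)"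
      by (auto simp: extremal_entry_def)
    thus ?thesis unfolding extremal_before_def by (simp only: conj_assoc)
  qed
  have "extremal_before 0 \<longleftrightarrow> (\<forall>k<n. r k = r 0)" by (simp add: extremal_before_def)
  moreover have "(\<exists>t. 1 \<le> t \<and> t \<le> i \<and> extremal_before t) \<longleftrightarrow> (\<exists>t. 1 \<le> t \<and> t \<le> i \<and>
       (\<forall>k<t. A $$ (k, k) = M) \<and>
       (\<forall>k<n. \<forall>l<t. k \<noteq> l \<longrightarrow> A $$ (k, l) = N) \<and>
       (\<forall>k. t \<le> k \<and> k < n \<longrightarrow> r k = r t))"
    using extremal_before_iff by blast
  moreover have "extremal_before 0 \<or> (\<exists>t. 1 \<le> t \<and> t \<le> i \<and> extremal_before t)
      \<longleftrightarrow> (\<exists>t\<le>i. extremal_before t)"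
  proof
    assume "\<exists>t\<le>i. extremal_before t"
    then obtain t where "t \<le> i" "extremal_before t" by blast
    thus "extremal_before 0 \<or> (\<exists>t. 1 \<le> t \<and> t \<le> i \<and> extremal_before t)"
      by (cases "t = 0") auto
  qed auto
  ultimately show ?thesis by (simp only:)
qed

lemma extremal_before_imp_equality_case:
  assumes "t \<le> i" and "extremal_before t"
  shows equality_case
proof -
  have entries: "\<forall>k<n. \<forall>j<t. A $$ (k, j) = extremal_entry k j"
    and levels: "\<forall>k. t \<le> k \<and> k < n \<longrightarrow> r k = r t"
    using assms(2) unfolding extremal_before_def by blast+
  have "r i = r t" using levels \<open>t \<le> i\<close> i_less by blast
  show ?thesis unfolding equality_case_def
  proof (intro conjI allI impI)
    fix k j assume "k < n" "j < n" and j: "j < i \<and> r i < r j"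
    have "j < t"
    proof (rule ccontr)
      assume "\<not> j < t"
      hence "r j = r t" using levels \<open>j < n\<close> not_less by blast
      thus False using j \<open>r i = r t\<close> by simp
    qed
    thus "A $$ (k, j) = extremal_entry k j" using entries \<open>k < n\<close> by blast
  next
    fix k assume "i \<le> k \<and> k < n"
    hence "r k = r t" using levels \<open>t \<le> i\<close> by (meson order_trans)
    thus "r k = r i" using \<open>r i = r t\<close> by simp
  qed
qed

lemma equality_case_imp_extremal_before_first_level:
  assumes equality_case
  shows "extremal_before first_level"
  unfolding extremal_before_def
proof (intro conjI allI impI)
  fix k j assume "k < n" "j < first_level"
  moreover from \<open>j < first_level\<close> have "j < i" "r i < r j"
    by (rule row_sum_gt_before_first_level)+
  ultimately show "A $$ (k, j) = extremal_entry k j"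
    using assms i_less unfolding equality_case_def by (meson less_trans)
next
  fix k assume k: "first_level \<le> k \<and> k < n"
  show "r k = r first_level"
  proof (cases "i \<le> k")
    case True
    hence "r k = r i" using assms k unfolding equality_case_def by blast
    thus ?thesis using row_sum_first_level by simp
  next
    case False
    hence "r i \<le> r k" and "r k \<le> r first_level" using k row_sum_antimono i_less by auto
    thus ?thesis using row_sum_first_level by simp
  qed
qed

lemma equality_case_iff_paper_condition:
  "equality_case \<longleftrightarrow> (\<forall>k<n. r k = r 0) \<or> (\<exists>t. 1 \<le> t \<and> t \<le> i \<and>
       (\<forall>k<t. A $$ (k, k) = M) \<and>
       (\<forall>k<n. \<forall>l<t. k \<noteq> l \<longrightarrow> A $$ (k, l) = N) \<and>
       (\<forall>k. t \<le> k \<and> k < n \<longrightarrow> r k = r t))"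
  unfolding paper_condition_iff_extremal_before
proof
  assume equality_case
  thus "\<exists>t\<le>i. extremal_before t"
    using equality_case_imp_extremal_before_first_level first_level_le by blast
next
  assume "\<exists>t\<le>i. extremal_before t"
  thus equality_case using extremal_before_imp_equality_case by blast
qed

end

lemma finite_offdiag_entries:
  "finite {A $$ (k, l) | k l. k < n \<and> l < n \<and> k \<noteq> l}"
  by (rule finite_subset[of _ "(\<lambda>(k, l). A $$ (k, l)) ` ({..<n} \<times> {..<n})"]) auto

theorem corollary1:
  fixes A :: "real mat" and n :: nat
  assumes "n \<ge> 2"
    and "A \<in> carrier_mat n n"
    and "\<forall>i<n. \<forall>j<n. A $$ (i, j) \<ge> 0"
    and "irreducible_mat n A"
    and "\<forall>k l. k \<le> l \<and> l < n \<longrightarrow> row_sum A l \<le> row_sum A k"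
    and "M = Max {A $$ (k, k) | k. k < n}"
    and "N = Max {A $$ (k, l) | k l. k < n \<and> l < n \<and> k \<noteq> l}"
    and "N > 0"
    and "i < n"
  shows "rho A \<le> (row_sum A i + M - N +
            sqrt ((row_sum A i - M + N)\<^sup>2 + 4 * N * (\<Sum>k<i. row_sum A k - row_sum A i))) / 2
   \<and> (rho A = (row_sum A i + M - N +
            sqrt ((row_sum A i - M + N)\<^sup>2 + 4 * N * (\<Sum>k<i. row_sum A k - row_sum A i))) / 2
      \<longleftrightarrow> (\<forall>k<n. row_sum A k = row_sum A 0)
          \<or> (\<exists>t. 1 \<le> t \<and> t \<le> i \<and>
               (\<forall>k<t. A $$ (k, k) = M) \<and>
               (\<forall>k<n. \<forall>l<t. k \<noteq> l \<longrightarrow> A $$ (k, l) = N) \<and>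
               (\<forall>k. t \<le> k \<and> k < n \<longrightarrow> row_sum A k = row_sum A t)))"
proof -
  have diag: "{A $$ (k, k) | k. k < n} = (\<lambda>k. A $$ (k, k)) ` {..<n}" by auto
  have "M \<in> (\<lambda>k. A $$ (k, k)) ` {..<n}"
    unfolding assms(6) diag using assms(9) by (intro Max_in) auto
  then obtain m where "m < n" and M_eq: "M = A $$ (m, m)" by blast
  interpret row_sum_bound A n M N i
  proof
    show "M \<le> row_sum A 0"
    proof -
      have "A $$ (m, m) \<le> row_sum A m"
        using assms(2,3) \<open>m < n\<close> by (auto simp: row_sum_def intro: member_le_sum)
      also have "\<dots> \<le> row_sum A 0" using assms(5) \<open>m < n\<close> by simp
      finally show ?thesis using M_eq by simp
    qed
  qed (use assms finite_offdiag_entries in \<open>auto simp: diag intro!: Max_ge\<close>)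
  have "(row_sum A i + M - N +
      sqrt ((row_sum A i - M + N)\<^sup>2 + 4 * N * (\<Sum>k<i. row_sum A k - row_sum A i))) / 2 = bound"
    by (simp add: bound_def excess_def)
  thus ?thesis
    using rho_le_bound rho_eq_bound_iff[OF assms(4)] equality_case_iff_paper_condition by simp
qed

end
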